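(* Let $T$ be a rooted tree on vertex set $[n]$ and let $p\in[n]^n$ be a prime parking function on $T$. Then the final driver (driver $n$) parks at the root of $T$.
   Context: Edges of $T$ are oriented towards the root. For $p\in[n]^n$, drivers $1,\dots,n$ arrive in order; driver $i$ parks at $p_i$ if unoccupied, otherwise follows the directed path towards the root and parks at the first unoccupied vertex, leaving if none exists. $(T,p)$ is a parking function if all drivers park. $T_v$ is the set of vertices with a directed path to $v$ (including $v$); the parking function $(T,p)$ is prime if $|T_v|<|\{i:p_i\in T_v\}|$ for every non-root vertex $v$. *)

theory Defs
  imports Main
begin

text \<open>A rooted tree on vertex set {1..n} with root r is given by a parent map par:
  the (directed) edges are v \<rightarrow> par v for every non-root vertex v, oriented towards the root.
  The value par r is irrelevant.\<close>

definition tree_edges :: "nat \<Rightarrow> nat \<Rightarrow> (nat \<Rightarrow> nat) \<Rightarrow> (nat \<times> nat) set" where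
  "tree_edges n r par = {(v, par v) | v. v \<in> {1..n} \<and> v \<noteq> r}"

definition rooted_tree :: "nat \<Rightarrow> nat \<Rightarrow> (nat \<Rightarrow> nat) \<Rightarrow> bool" where
  "rooted_tree n r par \<longleftrightarrow> r \<in> {1..n} \<and>
     (\<forall>v\<in>{1..n}. v \<noteq> r \<longrightarrow> par v \<in> {1..n}) \<and>
     (\<forall>v\<in>{1..n}. (v, r) \<in> (tree_edges n r par)\<^sup>*)"

definition depth :: "nat \<Rightarrow> (nat \<Rightarrow> nat) \<Rightarrow> nat \<Rightarrow> nat" where
  "depth r par v = (LEAST k. (par ^^ k) v = r)"

definition spot :: "nat \<Rightarrow> (nat \<Rightarrow> nat) \<Rightarrow> nat set \<Rightarrow> nat \<Rightarrow> nat option" where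
  "spot r par S v =
     (if \<exists>k\<le>depth r par v. (par ^^ k) v \<notin> S
      then Some ((par ^^ (LEAST k. k \<le> depth r par v \<and> (par ^^ k) v \<notin> S)) v)
      else None)"

fun occupied :: "nat \<Rightarrow> (nat \<Rightarrow> nat) \<Rightarrow> (nat \<Rightarrow> nat) \<Rightarrow> nat \<Rightarrow> nat set" where
  "occupied r par p 0 = {}"
| "occupied r par p (Suc i) =
     (case spot r par (occupied r par p i) (p (Suc i)) of
        None \<Rightarrow> occupied r par p i
      | Some u \<Rightarrow> insert u (occupied r par p i))"

text \<open>Where driver i (1-indexed) parks, None if driver i leaves.\<close>
definition parks_at :: "nat \<Rightarrow> (nat \<Rightarrow> nat) \<Rightarrow> (nat \<Rightarrow> nat) \<Rightarrow> nat \<Rightarrow> nat option" where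
  "parks_at r par p i = spot r par (occupied r par p (i - 1)) (p i)"

definition is_parking_function :: "nat \<Rightarrow> nat \<Rightarrow> (nat \<Rightarrow> nat) \<Rightarrow> (nat \<Rightarrow> nat) \<Rightarrow> bool" where
  "is_parking_function n r par p \<longleftrightarrow>
     (\<forall>i\<in>{1..n}. p i \<in> {1..n}) \<and> (\<forall>i\<in>{1..n}. parks_at r par p i \<noteq> None)"

definition subtree :: "nat \<Rightarrow> nat \<Rightarrow> (nat \<Rightarrow> nat) \<Rightarrow> nat \<Rightarrow> nat set" where
  "subtree n r par v = {u \<in> {1..n}. (u, v) \<in> (tree_edges n r par)\<^sup>*}"

definition is_prime_parking_function :: "nat \<Rightarrow> nat \<Rightarrow> (nat \<Rightarrow> nat) \<Rightarrow> (nat \<Rightarrow> nat) \<Rightarrow> bool" where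
  "is_prime_parking_function n r par p \<longleftrightarrow> is_parking_function n r par p \<and>
     (\<forall>v\<in>{1..n}. v \<noteq> r \<longrightarrow>
        card (subtree n r par v) < card {i \<in> {1..n}. p i \<in> subtree n r par v})"

end

theory Submission
  imports Defs
begin

text \<open>Suppose driver n parked at a vertex v other than the root. Then v is still free when every
  earlier driver arrives, so each earlier driver preferring a vertex of T_v finds a free spot
  on the way to v and parks in T_v - {v}. Different drivers park at different vertices, hence
  fewer than |T_v| earlier drivers prefer T_v, and together with driver n at most |T_v| drivers
  prefer T_v, contradicting primality.\<close>

lemma rtrancl_tree_edges_iff:
  "(u, v) \<in> (tree_edges n r par)\<^sup>* \<longleftrightarrow>
     (\<exists>j. (par^^j) u = v \<and> (\<forall>i<j. (par^^i) u \<noteq> r \<and> (par^^i) u \<in> {1..n}))"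
proof
  assume "(u, v) \<in> (tree_edges n r par)\<^sup>*"
  then show "\<exists>j. (par^^j) u = v \<and> (\<forall>i<j. (par^^i) u \<noteq> r \<and> (par^^i) u \<in> {1..n})"
  proof (induction rule: converse_rtrancl_induct)
    case base
    show ?case by (intro exI[of _ 0]) auto
  next
    case (step x y)
    then obtain j where j: "(par^^j) y = v" "\<forall>i<j. (par^^i) y \<noteq> r \<and> (par^^i) y \<in> {1..n}"
      by blast
    from step(1) have x: "y = par x" "x \<in> {1..n}" "x \<noteq> r" by (auto simp: tree_edges_def)
    have "\<forall>i<Suc j. (par^^i) x \<noteq> r \<and> (par^^i) x \<in> {1..n}"
    proof (intro allI impI)
      fix i assume "i < Suc j"
      then show "(par^^i) x \<noteq> r \<and> (par^^i) x \<in> {1..n}"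
        using j x by (cases i) (auto simp: funpow_Suc_right simp del: funpow.simps)
    qed
    moreover have "(par^^Suc j) x = v"
      using j x by (simp add: funpow_Suc_right del: funpow.simps)
    ultimately show ?case by blast
  qed
next
  assume "\<exists>j. (par^^j) u = v \<and> (\<forall>i<j. (par^^i) u \<noteq> r \<and> (par^^i) u \<in> {1..n})"
  then obtain j where j: "(par^^j) u = v" "\<forall>i<j. (par^^i) u \<noteq> r \<and> (par^^i) u \<in> {1..n}"
    by blast
  have "(u, (par^^k) u) \<in> (tree_edges n r par)\<^sup>*" if "k \<le> j" for k
    using that
  proof (induction k)
    case (Suc k)
    then have "((par^^k) u, par ((par^^k) u)) \<in> tree_edges n r par"
      using j(2) by (auto simp: tree_edges_def)
    with Suc show ?case by (simp add: rtrancl_into_rtrancl)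
  qed simp
  then show "(u, v) \<in> (tree_edges n r par)\<^sup>*" using j(1) by blast
qed

lemma depth_path:
  assumes "rooted_tree n r par" "x \<in> {1..n}"
  shows "(par^^depth r par x) x = r"
    and "\<forall>i<depth r par x. (par^^i) x \<noteq> r \<and> (par^^i) x \<in> {1..n}"
proof -
  have "(x, r) \<in> (tree_edges n r par)\<^sup>*" using assms by (auto simp: rooted_tree_def)
  then obtain d where d: "(par^^d) x = r" "\<forall>i<d. (par^^i) x \<noteq> r \<and> (par^^i) x \<in> {1..n}"
    by (auto simp: rtrancl_tree_edges_iff)
  have "depth r par x = d" unfolding depth_def
    by (rule Least_equality) (use d in \<open>auto simp: not_le[symmetric]\<close>)
  with d show "(par^^depth r par x) x = r"
    and "\<forall>i<depth r par x. (par^^i) x \<noteq> r \<and> (par^^i) x \<in> {1..n}" by auto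
qed

lemma funpow_le_depth_mem:
  assumes "rooted_tree n r par" "x \<in> {1..n}" "m \<le> depth r par x"
  shows "(par^^m) x \<in> {1..n}"
  using assms depth_path[OF assms(1,2)] by (cases "m = depth r par x") (auto simp: rooted_tree_def)

lemma subtree_reached_within_depth:
  assumes "rooted_tree n r par" "u \<in> subtree n r par v"
  obtains j where "j \<le> depth r par u" "(par^^j) u = v"
proof -
  have u: "u \<in> {1..n}" using assms(2) by (simp add: subtree_def)
  from assms(2) obtain j where j: "(par^^j) u = v" "\<forall>i<j. (par^^i) u \<noteq> r"
    by (auto simp: subtree_def rtrancl_tree_edges_iff)
  have "j \<le> depth r par u"
    using j(2) depth_path(1)[OF assms(1) u] by (metis not_le)
  with j(1) show thesis using that by blast
qed

lemma funpow_mem_subtree: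
  assumes "rooted_tree n r par" "u \<in> {1..n}" "j \<le> depth r par u" "m \<le> j"
  shows "(par^^m) u \<in> subtree n r par ((par^^j) u)"
proof -
  have shift: "(par^^i) ((par^^m) u) = (par^^(i + m)) u" for i
    by (simp add: funpow_add)
  have "(par^^(j - m)) ((par^^m) u) = (par^^j) u"
    unfolding shift using assms(4) by simp
  moreover have "\<forall>i<j - m. (par^^i) ((par^^m) u) \<noteq> r \<and> (par^^i) ((par^^m) u) \<in> {1..n}"
    using depth_path(2)[OF assms(1,2)] assms(3,4) unfolding shift by auto
  ultimately have "((par^^m) u, (par^^j) u) \<in> (tree_edges n r par)\<^sup>*"
    unfolding rtrancl_tree_edges_iff by blast
  moreover have "(par^^m) u \<in> {1..n}"
    using funpow_le_depth_mem assms by auto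
  ultimately show ?thesis by (simp add: subtree_def)
qed

lemma spot_SomeD:
  assumes "spot r par S x = Some s"
  shows "s \<notin> S"
    and "\<exists>m \<le> depth r par x. s = (par^^m) x \<and>
           (\<forall>k \<le> depth r par x. (par^^k) x \<notin> S \<longrightarrow> m \<le> k)"
proof -
  let ?P = "\<lambda>k. k \<le> depth r par x \<and> (par^^k) x \<notin> S"
  have ex: "\<exists>k. ?P k" and s: "s = (par^^(LEAST k. ?P k)) x"
    using assms unfolding spot_def by (auto split: if_splits)
  have "?P (LEAST k. ?P k)" using LeastI_ex[OF ex] .
  moreover have "\<forall>k. ?P k \<longrightarrow> (LEAST k. ?P k) \<le> k" by (auto intro: Least_le)
  ultimately show "s \<notin> S"
    and "\<exists>m \<le> depth r par x. s = (par^^m) x \<and>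
           (\<forall>k \<le> depth r par x. (par^^k) x \<notin> S \<longrightarrow> m \<le> k)"
    using s by blast+
qed

lemma spot_mem_vertices:
  assumes "rooted_tree n r par" "x \<in> {1..n}" "spot r par S x = Some s"
  shows "s \<in> {1..n}"
  using spot_SomeD(2)[OF assms(3)] funpow_le_depth_mem[OF assms(1,2)] by blast

lemma spot_in_subtree:
  assumes "rooted_tree n r par" "x \<in> subtree n r par v" "v \<notin> S"
  obtains s where "spot r par S x = Some s" "s \<in> subtree n r par v"
proof -
  have x: "x \<in> {1..n}" using assms(2) by (simp add: subtree_def)
  obtain j where j: "j \<le> depth r par x" "(par^^j) x = v"
    using subtree_reached_within_depth[OF assms(1,2)] .
  then have "\<exists>k\<le>depth r par x. (par^^k) x \<notin> S" using assms(3) by blast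
  then obtain s where s: "spot r par S x = Some s" unfolding spot_def by auto
  from spot_SomeD(2)[OF s] obtain m where m: "s = (par^^m) x" "m \<le> j"
    using j assms(3) by blast
  have "s \<in> subtree n r par v"
    using funpow_mem_subtree[OF assms(1) x j(1) m(2)] m(1) j(2) by simp
  with s show thesis using that by blast
qed

lemma occupied_mono: "i \<le> j \<Longrightarrow> occupied r par p i \<subseteq> occupied r par p j"
  by (rule lift_Suc_mono_le[of "occupied r par p"]) (auto split: option.split)

lemma parks_at_occupied:
  assumes "parks_at r par p i = Some s" "1 \<le> i"
  shows "s \<in> occupied r par p i" and "s \<notin> occupied r par p (i - 1)"
proof -
  obtain k where "i = Suc k" using assms(2) by (cases i) auto
  with assms(1) show "s \<in> occupied r par p i" by (simp add: parks_at_def)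
  show "s \<notin> occupied r par p (i - 1)"
    using spot_SomeD(1) assms(1) unfolding parks_at_def by blast
qed

lemma parks_at_inj:
  assumes "parks_at r par p i = Some s" "parks_at r par p j = Some s" "1 \<le> i" "1 \<le> j"
  shows "i = j"
proof -
  have "\<not> i' < j'"
    if "parks_at r par p i' = Some s" "parks_at r par p j' = Some s" "1 \<le> i'" "1 \<le> j'"
    for i' j'
  proof
    assume "i' < j'"
    then have "i' \<le> j' - 1" by simp
    then have "s \<in> occupied r par p (j' - 1)"
      using parks_at_occupied(1)[OF that(1,3)] occupied_mono[of i' "j' - 1" r par p] by blast
    with parks_at_occupied(2)[OF that(2,4)] show False by contradiction
  qed
  with assms show ?thesis by (meson linorder_neqE_nat)
qed

text \<open>Drivers 1..m preferring T_v all park in T_v - {v} as long as v stays free.\<close>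

lemma card_preferring_free_subtree_less:
  assumes "rooted_tree n r par" "v \<in> {1..n}" "v \<notin> occupied r par p m"
  shows "card {i \<in> {1..m}. p i \<in> subtree n r par v} < card (subtree n r par v)"
proof -
  let ?T = "subtree n r par v"
  let ?A = "{i \<in> {1..m}. p i \<in> ?T}"
  define f where "f i = the (parks_at r par p i)" for i
  have f: "parks_at r par p i = Some (f i)" "f i \<in> ?T - {v}" if "i \<in> ?A" for i
  proof -
    have i: "1 \<le> i" "i \<le> m" "p i \<in> ?T" using that by auto
    have "i - 1 \<le> m" using i(2) by simp
    then have "v \<notin> occupied r par p (i - 1)"
      using assms(3) occupied_mono[of "i - 1" m r par p] by blast
    then obtain s where s: "parks_at r par p i = Some s" "s \<in> ?T"
      unfolding parks_at_def by (rule spot_in_subtree[OF assms(1) i(3)])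
    have "s \<in> occupied r par p m"
      using parks_at_occupied(1)[OF s(1) i(1)] occupied_mono[OF i(2)] by blast
    with s assms(3) show "parks_at r par p i = Some (f i)" "f i \<in> ?T - {v}"
      by (auto simp: f_def)
  qed
  have "inj_on f ?A"
  proof (rule inj_onI)
    fix i j assume ij: "i \<in> ?A" "j \<in> ?A" "f i = f j"
    have "parks_at r par p j = Some (f i)" using f(1)[OF ij(2)] ij(3) by simp
    moreover have "1 \<le> i" "1 \<le> j" using ij(1,2) by simp_all
    ultimately show "i = j" using parks_at_inj[OF f(1)[OF ij(1)]] by blast
  qed
  moreover have "f ` ?A \<subseteq> ?T - {v}" using f(2) by blast
  moreover have "finite ?T" by (simp add: subtree_def)
  ultimately have "card ?A \<le> card (?T - {v})"
    using card_inj_on_le by blast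
  also have "\<dots> < card ?T"
    using assms(2) \<open>finite ?T\<close> by (intro psubset_card_mono) (auto simp: subtree_def)
  finally show ?thesis .
qed

theorem proposition4p3:
  fixes n r :: nat and par p :: "nat \<Rightarrow> nat"
  assumes "rooted_tree n r par"
    and "is_prime_parking_function n r par p"
  shows "parks_at r par p n = Some r"
proof (rule ccontr)
  assume not_root: "parks_at r par p n \<noteq> Some r"
  have n: "1 \<le> n" using assms(1) by (auto simp: rooted_tree_def)
  moreover have "is_parking_function n r par p"
    using assms(2) unfolding is_prime_parking_function_def by blast
  ultimately have "p n \<in> {1..n}" "parks_at r par p n \<noteq> None"
    unfolding is_parking_function_def by auto
  then obtain v where v: "parks_at r par p n = Some v" by auto
  have v_vertex: "v \<in> {1..n}"
    using spot_mem_vertices[OF assms(1) \<open>p n \<in> {1..n}\<close>] v unfolding parks_at_def .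
  let ?T = "subtree n r par v"
  have "{i \<in> {1..n}. p i \<in> ?T} \<subseteq> insert n {i \<in> {1..n - 1}. p i \<in> ?T}" by auto
  then have "card {i \<in> {1..n}. p i \<in> ?T} \<le> card (insert n {i \<in> {1..n - 1}. p i \<in> ?T})"
    by (intro card_mono) auto
  also have "\<dots> \<le> Suc (card {i \<in> {1..n - 1}. p i \<in> ?T})"
    by (rule card_insert_le_m1) simp_all
  also have "\<dots> \<le> card ?T"
    using card_preferring_free_subtree_less[OF assms(1) v_vertex parks_at_occupied(2)[OF v n]]
    by simp
  finally have "card {i \<in> {1..n}. p i \<in> ?T} \<le> card ?T" .
  moreover have "v \<noteq> r" using v not_root by simp
  with assms(2) v_vertex have "card ?T < card {i \<in> {1..n}. p i \<in> ?T}"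
    unfolding is_prime_parking_function_def by blast
  ultimately show False by linarith
qed

end
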